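(* Let $(\mathcal{A}'_\ell,\mathcal{A}'_r)$ and $(\mathcal{A}''_\ell,\mathcal{A}''_r)$ be pairs of subalgebras of a non-commutative space $(\mathcal{A},\varphi)$ which are bi-monotonically independent (in this order) with respect to $\varphi$. Let $n\ge1$, $\chi:\{1,\dots,n\}\to\{\ell,r\}$, and $a'_j\in\mathcal{A}'_{\chi(j)}$, $a''_j\in\mathcal{A}''_{\chi(j)}$ for $1\le j\le n$. Then \[\varphi\big((a'_1+a''_1)\cdots(a'_n+a''_n)\big)=\sum_{V\subseteq\{1,\dots,n\}}\varphi(a'_V)\prod_{W\in V_\chi}\varphi(a''_W).\]
   Context: Notation. For $\chi:\{1,\dots,n\}\to\{\ell,r\}$ with $\chi^{-1}(\{\ell\})=\{i_1<\dots<i_p\}$ and $\chi^{-1}(\{r\})=\{i_{p+1}>\dots>i_n\}$, $\prec_\chi$ is the total order $i_1\prec_\chi\cdots\prec_\chi i_n$; a $\chi$-interval is an interval for $\prec_\chi$. For $V=\{v_1<\dots<v_s\}$, $a_V=a_{v_1}\cdots a_{v_s}$, and $\varphi$ of the empty product is $1$. For $V=\{v_1\prec_\chi\cdots\prec_\chi v_s\}\subseteq\{1,\dots,n\}$, $V_\chi$ denotes the family of (possibly empty) $\chi$-intervals $V_1,\dots,V_{s+1}$ with $V_1=\{i:i\prec_\chi v_1\}$, $V_{s+1}=\{i:v_s\prec_\chi i\}$, $V_j=\{i:v_{j-1}\prec_\chi i\prec_\chi v_j\}$ for $2\le j\le s$ (for $V=\emptyset$, $V_\chi=\{\{1,\dots,n\}\}$).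 For $\omega:\{1,\dots,n\}\to K$, $\pi_{\chi,\omega}$ is the unique partition of $\{1,\dots,n\}$ into blocks $V_1,\dots,V_m$ that are $\chi$-intervals with $\max_{\prec_\chi}V_k\prec_\chi\min_{\prec_\chi}V_{k+1}$, $\omega$ constant on each block and $\omega(V_k)\ne\omega(V_{k+1})$. A non-commutative space is a complex algebra with a linear functional ($\varphi(1)=1$ if unital). $\sqcup$ denotes free product without identification of units, $*$ free product of unital algebras with identified units, $\widetilde{\mathcal{C}}=\mathbb{C}1\oplus\mathcal{C}$ unitization. c-bi-free product: for pairs of unital algebras $(\mathcal{B}_{k,\ell},\mathcal{B}_{k,r})$ with unital functionals $\varphi_k,\psi_k$ on $\mathcal{B}_{k,\ell}*\mathcal{B}_{k,r}$, it is the unique pair $(\varphi,\psi)$ of unital functionals on $*_k(\mathcal{B}_{k,\ell}*\mathcal{B}_{k,r})$ extending them such that whenever $b_j\in\mathcal{B}_{\omega(j),\chi(j)}$ and $\psi(b_V)=0$ for all $V\in\pi_{\chi,\omega}$, then $\psi(b_1\cdots b_n)=0$ and $\varphi(b_1\cdots b_n)=\prod_{V\in\pi_{\chi,\omega}}\varphi(b_V)$. Bi-monotonic product: for functionals $\varphi_k$ on $\mathcal{A}_{k,\ell}\sqcup\mathcal{A}_{k,r}$ ($k=1,2$), $\varphi_1\rhd\!\!\rhd\varphi_2$ is the restriction to $(\mathcal{A}_{1,\ell}\sqcup\mathcal{A}_{1,r})\sqcup(\mathcal{A}_{2,\ell}\sqcup\mathcal{A}_{2,r})$ of the first functional of the c-bi-free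 product of $(\widetilde{\varphi_1},\delta_1)$ and $(\widetilde{\varphi_2},\widetilde{\varphi_2})$ for pairs $(\widetilde{\mathcal{A}_{k,\ell}},\widetilde{\mathcal{A}_{k,r}})$, where $\widetilde{\varphi_k}$ is the unital extension of $\varphi_k$ and $\delta_1$ is the unital functional vanishing on $\mathcal{A}_{1,\ell}\sqcup\mathcal{A}_{1,r}$. Two pairs of subalgebras of $(\mathcal{A},\varphi)$ are bi-monotonically independent (in the given order) if $\varphi\circ\iota=\varphi_1\rhd\!\!\rhd\varphi_2$, with $\iota$ the homomorphism from the free product induced by inclusions and $\varphi_k=\varphi\circ\iota|_{\mathcal{A}_{k,\ell}\sqcup\mathcal{A}_{k,r}}$. *)

theory Defs
  imports Complex_Main
begin

datatype side = Lft | Rgt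

definition complex_alg :: "(complex \<Rightarrow> 'a::ring \<Rightarrow> 'a) \<Rightarrow> bool" where
  "complex_alg smul \<longleftrightarrow>
     (\<forall>c x y. smul c (x + y) = smul c x + smul c y) \<and>
     (\<forall>c d x. smul (c + d) x = smul c x + smul d x) \<and>
     (\<forall>c d x. smul (c * d) x = smul c (smul d x)) \<and>
     (\<forall>x. smul 1 x = x) \<and>
     (\<forall>c x y. smul c (x * y) = smul c x * y \<and> smul c (x * y) = x * smul c y)"

definition lin_functional :: "(complex \<Rightarrow> 'a::ring \<Rightarrow> 'a) \<Rightarrow> ('a \<Rightarrow> complex) \<Rightarrow> bool" where
  "lin_functional smul \<phi> \<longleftrightarrow>
     (\<forall>x y. \<phi> (x + y) = \<phi> x + \<phi> y) \<and> (\<forall>c x. \<phi> (smul c x) = c * \<phi> x)"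

definition nc_space :: "(complex \<Rightarrow> 'a::ring \<Rightarrow> 'a) \<Rightarrow> ('a \<Rightarrow> complex) \<Rightarrow> bool" where
  "nc_space smul \<phi> \<longleftrightarrow> complex_alg smul \<and> lin_functional smul \<phi> \<and>
     (\<forall>u. (\<forall>x. u * x = x \<and> x * u = x) \<longrightarrow> \<phi> u = 1)"

definition subalgebra :: "(complex \<Rightarrow> 'a::ring \<Rightarrow> 'a) \<Rightarrow> 'a set \<Rightarrow> bool" where
  "subalgebra smul S \<longleftrightarrow> 0 \<in> S \<and> (\<forall>x\<in>S. \<forall>y\<in>S. x + y \<in> S \<and> x * y \<in> S) \<and>
     (\<forall>c. \<forall>x\<in>S. smul c x \<in> S)"

text \<open>Product of a nonempty list (in order); the empty product is never evaluated.\<close>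
fun lprod :: "'a::times list \<Rightarrow> 'a" where
  "lprod [] = undefined"
| "lprod [x] = x"
| "lprod (x # y # xs) = x * lprod (y # xs)"

definition phiprod :: "('a::ring \<Rightarrow> complex) \<Rightarrow> 'a list \<Rightarrow> complex" where
  "phiprod \<phi> xs = (if xs = [] then 1 else \<phi> (lprod xs))"

definition chi_less :: "(nat \<Rightarrow> side) \<Rightarrow> nat \<Rightarrow> nat \<Rightarrow> bool" where
  "chi_less \<chi> i j \<longleftrightarrow>
     (\<chi> i = Lft \<and> \<chi> j = Lft \<and> i < j) \<or> (\<chi> i = Rgt \<and> \<chi> j = Rgt \<and> j < i) \<or>
     (\<chi> i = Lft \<and> \<chi> j = Rgt)"

definition chi_le :: "(nat \<Rightarrow> side) \<Rightarrow> nat \<Rightarrow> nat \<Rightarrow> bool" where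
  "chi_le \<chi> i j \<longleftrightarrow> i = j \<or> chi_less \<chi> i j"

definition chi_sorted :: "(nat \<Rightarrow> side) \<Rightarrow> nat set \<Rightarrow> nat list" where
  "chi_sorted \<chi> V = (THE xs. set xs = V \<and> sorted_wrt (chi_less \<chi>) xs)"

text \<open>The family V_chi = (V_1, ..., V_{s+1}) of chi-intervals of {1..n} cut out by V.\<close>
definition chi_gaps :: "(nat \<Rightarrow> side) \<Rightarrow> nat \<Rightarrow> nat set \<Rightarrow> nat set list" where
  "chi_gaps \<chi> n V = (let vs = chi_sorted \<chi> V; s = length vs in
     map (\<lambda>j. {i \<in> {1..n}. (j = 0 \<or> chi_less \<chi> (vs ! (j - 1)) i) \<and>
                            (j = s \<or> chi_less \<chi> i (vs ! j))}) [0..<s + 1])"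

text \<open>pi_{chi,omega}: the maximal chi-intervals of {1..n} on which omega is constant.\<close>
definition same_block :: "nat \<Rightarrow> (nat \<Rightarrow> side) \<Rightarrow> (nat \<Rightarrow> nat) \<Rightarrow> nat \<Rightarrow> nat \<Rightarrow> bool" where
  "same_block n \<chi> \<omega> i j \<longleftrightarrow>
     (\<forall>k\<in>{1..n}. ((chi_le \<chi> i k \<and> chi_le \<chi> k j) \<or> (chi_le \<chi> j k \<and> chi_le \<chi> k i))
        \<longrightarrow> \<omega> k = \<omega> i)"

definition pi_blocks :: "nat \<Rightarrow> (nat \<Rightarrow> side) \<Rightarrow> (nat \<Rightarrow> nat) \<Rightarrow> nat set set" where
  "pi_blocks n \<chi> \<omega> = {{j \<in> {1..n}. same_block n \<chi> \<omega> i j} | i. i \<in> {1..n}}"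

text \<open>Words in the free product (without identification of units) of the four algebras
  Alg k s (k in {1,2}, s a side): lists of tagged letters.  A linear functional on
  that free product, resp. a unital functional on the unital free product of the
  unitizations, is encoded by its values on words (value 1 on the empty word).\<close>
type_synonym 'a word = "(nat \<times> side \<times> 'a) list"

definition valid_word :: "(nat \<Rightarrow> side \<Rightarrow> 'a set) \<Rightarrow> 'a word \<Rightarrow> bool" where
  "valid_word Alg w \<longleftrightarrow> (\<forall>(k, s, a) \<in> set w. k \<in> {1, 2} \<and> a \<in> Alg k s)"

definition word_functional ::
  "(complex \<Rightarrow> 'a::ring \<Rightarrow> 'a) \<Rightarrow> (nat \<Rightarrow> side \<Rightarrow> 'a set) \<Rightarrow> ('a word \<Rightarrow> complex) \<Rightarrow> bool" where
  "word_functional smul Alg \<Phi> \<longleftrightarrow> \<Phi> [] = 1 \<and>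
     (\<forall>u v k s a b. valid_word Alg u \<and> valid_word Alg v \<and> k \<in> {1, 2} \<and>
        a \<in> Alg k s \<and> b \<in> Alg k s \<longrightarrow>
        \<Phi> (u @ (k, s, a + b) # v) = \<Phi> (u @ (k, s, a) # v) + \<Phi> (u @ (k, s, b) # v) \<and>
        (\<forall>c. \<Phi> (u @ (k, s, smul c a) # v) = c * \<Phi> (u @ (k, s, a) # v)) \<and>
        \<Phi> (u @ (k, s, a) # (k, s, b) # v) = \<Phi> (u @ (k, s, a * b) # v))"

text \<open>Value of the functional on b_V = b_{v_1}...b_{v_s} (natural order), where
  b_j = lam j 1 + a j is an element of the unitization of Alg (omega j) (chi j).\<close>
definition uext ::
  "('a word \<Rightarrow> complex) \<Rightarrow> (nat \<Rightarrow> nat) \<Rightarrow> (nat \<Rightarrow> side) \<Rightarrow> (nat \<Rightarrow> complex) \<Rightarrow> (nat \<Rightarrow> 'a)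
     \<Rightarrow> nat set \<Rightarrow> complex" where
  "uext \<Phi> \<omega> \<chi> lam a V = (\<Sum>S\<in>Pow V. (\<Prod>j\<in>V - S. lam j) *
       \<Phi> (map (\<lambda>j. (\<omega> j, \<chi> j, a j)) (sorted_list_of_set S)))"

definition alg4 :: "'a set \<Rightarrow> 'a set \<Rightarrow> 'a set \<Rightarrow> 'a set \<Rightarrow> nat \<Rightarrow> side \<Rightarrow> 'a set" where
  "alg4 A1l A1r A2l A2r k s =
     (if k = 1 then (if s = Lft then A1l else A1r) else (if s = Lft then A2l else A2r))"

text \<open>(Phi, Psi) is the c-bi-free product of (tilde phi_1, delta_1) and
  (tilde phi_2, tilde phi_2), where phi_k = phi o iota restricted to the k-th pair.\<close>
definition bimono_cbifree ::
  "(complex \<Rightarrow> 'a::ring \<Rightarrow> 'a) \<Rightarrow> ('a \<Rightarrow> complex) \<Rightarrow> (nat \<Rightarrow> side \<Rightarrow> 'a set)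
     \<Rightarrow> ('a word \<Rightarrow> complex) \<Rightarrow> ('a word \<Rightarrow> complex) \<Rightarrow> bool" where
  "bimono_cbifree smul \<phi> Alg \<Phi> \<Psi> \<longleftrightarrow>
     word_functional smul Alg \<Phi> \<and> word_functional smul Alg \<Psi> \<and>
     (\<forall>w. valid_word Alg w \<and> w \<noteq> [] \<and> (\<forall>x\<in>set w. fst x = 1) \<longrightarrow>
        \<Phi> w = \<phi> (lprod (map (snd \<circ> snd) w)) \<and> \<Psi> w = 0) \<and>
     (\<forall>w. valid_word Alg w \<and> w \<noteq> [] \<and> (\<forall>x\<in>set w. fst x = 2) \<longrightarrow>
        \<Phi> w = \<phi> (lprod (map (snd \<circ> snd) w)) \<and> \<Psi> w = \<phi> (lprod (map (snd \<circ> snd) w))) \<and>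
     (\<forall>n \<omega> \<chi> lam a. n \<ge> 1 \<and> (\<forall>j\<in>{1..n}. \<omega> j \<in> {1, 2} \<and> a j \<in> Alg (\<omega> j) (\<chi> j)) \<and>
        (\<forall>V\<in>pi_blocks n \<chi> \<omega>. uext \<Psi> \<omega> \<chi> lam a V = 0) \<longrightarrow>
        uext \<Psi> \<omega> \<chi> lam a {1..n} = 0 \<and>
        uext \<Phi> \<omega> \<chi> lam a {1..n} = (\<Prod>V\<in>pi_blocks n \<chi> \<omega>. uext \<Phi> \<omega> \<chi> lam a V))"

definition bimono_indep ::
  "(complex \<Rightarrow> 'a::ring \<Rightarrow> 'a) \<Rightarrow> ('a \<Rightarrow> complex) \<Rightarrow> 'a set \<Rightarrow> 'a set \<Rightarrow> 'a set \<Rightarrow> 'a set \<Rightarrow> bool" where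
  "bimono_indep smul \<phi> A1l A1r A2l A2r \<longleftrightarrow>
     (\<exists>\<Phi> \<Psi>. bimono_cbifree smul \<phi> (alg4 A1l A1r A2l A2r) \<Phi> \<Psi> \<and>
        (\<forall>w. valid_word (alg4 A1l A1r A2l A2r) w \<and> w \<noteq> [] \<longrightarrow>
           \<phi> (lprod (map (snd \<circ> snd) w)) = \<Phi> w))"

end

theory Submission
  imports Defs
begin

text \<open>
  Expanding the product and using the linearity of \<phi>, it suffices to treat one word per
  subset V, whose letters come from the first pair at the positions in V and from the second
  pair elsewhere.  The c-bi-free factorisation of \<Phi> applies only when \<Psi> vanishes on every
  block of \<pi>_{\<chi>,\<omega>}, so it is applied to unitised letters \<lambda>_j 1 + a_j.  For a subword J
  containing V, the difference between its \<Phi>-value and the \<Phi>-value of V times the product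
  of the \<Phi>-values of the gaps of V inside J is affine in each \<lambda>_j with j outside V, and
  the coefficient of \<lambda>_j is the same difference for J - {j}; by induction on J it does not
  depend on the scalars.  Choose the \<lambda>_j so that \<Psi> vanishes on every gap.  Then all
  blocks have \<Psi>-value 0, and both terms of the difference contain the \<Phi>-value of a gap,
  which equals its \<Psi>-value.  So the difference vanishes, in particular for all \<lambda>_j = 0.
\<close>

lemma chi_less_irrefl: "\<not> chi_less \<chi> i i"
  by (cases "\<chi> i") (auto simp: chi_less_def)

lemma chi_less_asym: "chi_less \<chi> i j \<Longrightarrow> \<not> chi_less \<chi> j i"
  by (cases "\<chi> i"; cases "\<chi> j") (auto simp: chi_less_def)

lemma chi_less_trans: "chi_less \<chi> i j \<Longrightarrow> chi_less \<chi> j k \<Longrightarrow> chi_less \<chi> i k"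
  by (cases "\<chi> i"; cases "\<chi> j"; cases "\<chi> k") (auto simp: chi_less_def)

lemma chi_less_linear: "i \<noteq> j \<Longrightarrow> chi_less \<chi> i j \<or> chi_less \<chi> j i"
  by (cases "\<chi> i"; cases "\<chi> j") (auto simp: chi_less_def)

lemma chi_le_total: "chi_le \<chi> i j \<or> chi_le \<chi> j i"
  using chi_less_linear unfolding chi_le_def by blast

lemma chi_less_reindex:
  assumes "strict_mono_on A e" "i \<in> A" "j \<in> A"
  shows "chi_less (\<lambda>k. \<chi> (e k)) i j \<longleftrightarrow> chi_less \<chi> (e i) (e j)"
  using strict_mono_on_less[OF assms] strict_mono_on_less[OF assms(1,3,2)]
  unfolding chi_less_def by simp

lemma chi_le_reindex:
  assumes "strict_mono_on A e" "i \<in> A" "j \<in> A"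
  shows "chi_le (\<lambda>k. \<chi> (e k)) i j \<longleftrightarrow> chi_le \<chi> (e i) (e j)"
  using strict_mono_on_eq[OF assms] chi_less_reindex[OF assms]
  unfolding chi_le_def by simp

lemma sorted_wrt_unique:
  assumes asym: "\<And>x y. R x y \<Longrightarrow> \<not> R y x"
  shows "sorted_wrt R xs \<Longrightarrow> sorted_wrt R ys \<Longrightarrow> set xs = set ys \<Longrightarrow> xs = ys"
proof (induction xs arbitrary: ys)
  case Nil
  then show ?case by simp
next
  case (Cons x xs)
  then obtain y ys' where ys: "ys = y # ys'" by (cases ys) auto
  have "x = y"
  proof (rule ccontr)
    assume "x \<noteq> y"
    then have "x \<in> set ys'" "y \<in> set xs" using Cons.prems ys by auto
    then have "R y x" "R x y" using Cons.prems(1,2) ys by auto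
    then show False using asym by blast
  qed
  moreover have "\<not> R z z" for z using asym by blast
  then have "x \<notin> set xs" "y \<notin> set ys'" using Cons.prems ys by auto
  ultimately have "set xs = set ys'" using Cons.prems(3) ys by auto
  then have "xs = ys'" using Cons ys by simp
  with \<open>x = y\<close> show ?case using ys by simp
qed

lemma chi_sorted_exists:
  assumes "finite V"
  shows "\<exists>xs. set xs = V \<and> sorted_wrt (chi_less \<chi>) xs"
proof -
  let ?L = "sorted_list_of_set {v\<in>V. \<chi> v = Lft}"
  let ?R = "sorted_list_of_set {v\<in>V. \<chi> v = Rgt}"
  have "set (?L @ rev ?R) = V" using assms by (auto intro: side.exhaust)
  moreover have "sorted_wrt (chi_less \<chi>) ?L" "sorted_wrt (\<lambda>x y. chi_less \<chi> y x) ?R"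
    by (rule sorted_wrt_mono_rel[OF _ strict_sorted_list_of_set];
        use assms in \<open>auto simp: chi_less_def\<close>)+
  then have "sorted_wrt (chi_less \<chi>) (?L @ rev ?R)"
    unfolding sorted_wrt_append sorted_wrt_rev using assms by (auto simp: chi_less_def)
  ultimately show ?thesis by blast
qed

lemma
  assumes "finite V"
  shows set_chi_sorted: "set (chi_sorted \<chi> V) = V"
    and sorted_wrt_chi_sorted: "sorted_wrt (chi_less \<chi>) (chi_sorted \<chi> V)"
proof -
  have "\<exists>!xs. set xs = V \<and> sorted_wrt (chi_less \<chi>) xs"
    using chi_sorted_exists[OF assms] sorted_wrt_unique[of "chi_less \<chi>"] chi_less_asym by metis
  then have "set (chi_sorted \<chi> V) = V \<and> sorted_wrt (chi_less \<chi>) (chi_sorted \<chi> V)"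
    unfolding chi_sorted_def by (rule theI')
  then show "set (chi_sorted \<chi> V) = V" "sorted_wrt (chi_less \<chi>) (chi_sorted \<chi> V)" by auto
qed

lemma distinct_if_sorted_wrt_chi_less: "sorted_wrt (chi_less \<chi>) xs \<Longrightarrow> distinct xs"
  by (induction xs) (auto simp: chi_less_irrefl)

definition chi_rank :: "(nat \<Rightarrow> side) \<Rightarrow> nat set \<Rightarrow> nat \<Rightarrow> nat" where
  "chi_rank \<chi> V y = card {v\<in>V. chi_less \<chi> v y}"

definition chi_gap :: "(nat \<Rightarrow> side) \<Rightarrow> nat \<Rightarrow> nat set \<Rightarrow> nat \<Rightarrow> nat set" where
  "chi_gap \<chi> n V t = {y\<in>{1..n}. y \<notin> V \<and> chi_rank \<chi> V y = t}"

lemma chi_rank_le_card: "finite V \<Longrightarrow> chi_rank \<chi> V y \<le> card V"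
  unfolding chi_rank_def by (rule card_mono) auto

lemma chi_gap_subset: "chi_gap \<chi> n V t \<subseteq> {1..n} - V"
  unfolding chi_gap_def by auto

lemma chi_rank_of_between:
  assumes sorted: "sorted_wrt (chi_less \<chi>) vs" and t: "t \<le> length vs"
    and between: "(t = 0 \<or> chi_less \<chi> (vs!(t-1)) y) \<and> (t = length vs \<or> chi_less \<chi> y (vs!t))"
  shows "y \<notin> set vs \<and> chi_rank \<chi> (set vs) y = t"
proof -
  have less: "chi_less \<chi> (vs!i) (vs!j)" if "i < j" "j < length vs" for i j
    using sorted that sorted_wrt_nth_less by blast
  have before: "chi_less \<chi> (vs!i) y" if "i < t" for i
  proof -
    have "chi_less \<chi> (vs!(t-1)) y" using between that by auto
    moreover have "i = t - 1 \<or> i < t - 1 \<and> t - 1 < length vs" using that t by linarith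
    then have "i = t - 1 \<or> chi_less \<chi> (vs!i) (vs!(t-1))" using less by blast
    ultimately show ?thesis using chi_less_trans by blast
  qed
  have after: "chi_less \<chi> y (vs!i)" if "t \<le> i" "i < length vs" for i
  proof -
    have "chi_less \<chi> y (vs!t)" using between that by auto
    moreover have "i = t \<or> chi_less \<chi> (vs!t) (vs!i)" using less[of t i] that by linarith
    ultimately show ?thesis using chi_less_trans by blast
  qed
  have "y \<noteq> vs!i" if "i < length vs" for i
    using before after that chi_less_irrefl not_less by metis
  then have notin: "y \<notin> set vs" by (auto simp: in_set_conv_nth)
  have "{v\<in>set vs. chi_less \<chi> v y} = set (take t vs)"
  proof (intro set_eqI iffI)
    fix v assume "v \<in> {v\<in>set vs. chi_less \<chi> v y}"
    then obtain i where "i < length vs" "vs!i = v" "chi_less \<chi> v y"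
      by (auto simp: in_set_conv_nth)
    moreover have "i < t" using after chi_less_asym calculation not_less by metis
    ultimately show "v \<in> set (take t vs)" by (auto simp: in_set_conv_nth)
  next
    fix v assume "v \<in> set (take t vs)"
    then obtain i where "i < t" "v = vs!i" using t by (auto simp: in_set_conv_nth)
    then show "v \<in> {v\<in>set vs. chi_less \<chi> v y}" using before t by simp
  qed
  moreover have "distinct (take t vs)"
    using distinct_if_sorted_wrt_chi_less[OF sorted] by simp
  ultimately have "chi_rank \<chi> (set vs) y = t"
    unfolding chi_rank_def using t by (simp add: distinct_card)
  with notin show ?thesis by simp
qed

lemma exists_between:
  assumes sorted: "sorted_wrt (chi_less \<chi>) vs" and y: "y \<notin> set vs"
  obtains t where "t \<le> length vs"
    "(t = 0 \<or> chi_less \<chi> (vs!(t-1)) y) \<and> (t = length vs \<or> chi_less \<chi> y (vs!t))"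
proof -
  define t where "t = (LEAST i. i = length vs \<or> \<not> chi_less \<chi> (vs!i) y)"
  have first: "t = length vs \<or> \<not> chi_less \<chi> (vs!t) y"
    unfolding t_def by (rule LeastI[of _ "length vs"]) simp
  have t: "t \<le> length vs" unfolding t_def by (rule Least_le) simp
  have "t = 0 \<or> chi_less \<chi> (vs!(t-1)) y"
  proof (cases "t = 0")
    case False
    then have "\<not> (t - 1 = length vs \<or> \<not> chi_less \<chi> (vs!(t-1)) y)"
      unfolding t_def by (intro not_less_Least) simp
    then show ?thesis by simp
  qed simp
  moreover have "t = length vs \<or> chi_less \<chi> y (vs!t)"
    using first t y chi_less_linear by (metis le_neq_implies_less nth_mem)
  ultimately show thesis using t that by blast
qed

lemma between_iff_chi_rank:
  assumes sorted: "sorted_wrt (chi_less \<chi>) vs" and t: "t \<le> length vs"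
  shows "((t = 0 \<or> chi_less \<chi> (vs!(t-1)) y) \<and> (t = length vs \<or> chi_less \<chi> y (vs!t)))
     \<longleftrightarrow> y \<notin> set vs \<and> chi_rank \<chi> (set vs) y = t"
proof
  assume "y \<notin> set vs \<and> chi_rank \<chi> (set vs) y = t"
  moreover obtain t' where "t' \<le> length vs"
    "(t' = 0 \<or> chi_less \<chi> (vs!(t'-1)) y) \<and> (t' = length vs \<or> chi_less \<chi> y (vs!t'))"
    using exists_between[OF sorted] calculation by blast
  moreover note chi_rank_of_between[OF sorted calculation(2,3)]
  ultimately show "(t = 0 \<or> chi_less \<chi> (vs!(t-1)) y) \<and> (t = length vs \<or> chi_less \<chi> y (vs!t))"
    by simp
qed (rule chi_rank_of_between[OF sorted t])

lemma chi_gaps_eq_map_chi_gap: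
  assumes "finite V"
  shows "chi_gaps \<chi> n V = map (chi_gap \<chi> n V) [0..<card V + 1]"
proof -
  let ?vs = "chi_sorted \<chi> V"
  have set: "set ?vs = V" and sorted: "sorted_wrt (chi_less \<chi>) ?vs"
    using assms by (rule set_chi_sorted, rule sorted_wrt_chi_sorted)
  have len: "length ?vs = card V"
    using set sorted distinct_if_sorted_wrt_chi_less distinct_card by metis
  show ?thesis
    unfolding chi_gaps_def Let_def len
  proof (rule map_cong[OF refl])
    fix t assume "t \<in> set [0..<card V + 1]"
    then have "t \<le> length ?vs" by (auto simp: len)
    then show "{i \<in> {1..n}. (t = 0 \<or> chi_less \<chi> (?vs ! (t - 1)) i) \<and>
        (t = card V \<or> chi_less \<chi> i (?vs ! t))} = chi_gap \<chi> n V t"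
      unfolding chi_gap_def using between_iff_chi_rank[OF sorted] set len by auto
  qed
qed

lemma prod_list_chi_gaps:
  assumes "finite V"
  shows "(\<Prod>W\<leftarrow>chi_gaps \<chi> n V. f W) = (\<Prod>t\<in>{0..card V}. f (chi_gap \<chi> n V t))"
proof -
  have "{0..card V} = set [0..<card V + 1]" by auto
  then show ?thesis
    unfolding chi_gaps_eq_map_chi_gap[OF assms]
    by (simp only: prod.distinct_set_conv_list distinct_upt map_map comp_def)
qed

lemma chi_rank_eq_iff:
  assumes V: "finite V" and x: "x \<notin> V" and le: "chi_le \<chi> x y"
  shows "chi_rank \<chi> V x = chi_rank \<chi> V y \<longleftrightarrow> (\<nexists>v. v \<in> V \<and> chi_less \<chi> x v \<and> chi_less \<chi> v y)"
proof -
  let ?X = "{v\<in>V. chi_less \<chi> v x}" and ?Y = "{v\<in>V. chi_less \<chi> v y}"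
  have sub: "?X \<subseteq> ?Y" using le chi_less_trans unfolding chi_le_def by blast
  have "chi_rank \<chi> V x = chi_rank \<chi> V y \<longleftrightarrow> ?X = ?Y"
    unfolding chi_rank_def using V sub card_subset_eq[of ?Y ?X] by auto
  also have "\<dots> \<longleftrightarrow> (\<nexists>v. v \<in> V \<and> chi_less \<chi> x v \<and> chi_less \<chi> v y)"
  proof
    assume "?X = ?Y"
    then show "\<nexists>v. v \<in> V \<and> chi_less \<chi> x v \<and> chi_less \<chi> v y"
      using chi_less_asym by blast
  next
    assume none: "\<nexists>v. v \<in> V \<and> chi_less \<chi> x v \<and> chi_less \<chi> v y"
    have "v \<in> ?X" if "v \<in> ?Y" for v
      using that x none chi_less_linear[of v x \<chi>] by auto
    with sub show "?X = ?Y" by blast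
  qed
  finally show ?thesis .
qed

lemma chi_rank_eq_iff_none_between:
  assumes V: "finite V" and x: "x \<notin> V"
  shows "(\<forall>k\<in>V. \<not> ((chi_le \<chi> x k \<and> chi_le \<chi> k y) \<or> (chi_le \<chi> y k \<and> chi_le \<chi> k x)))
    \<longleftrightarrow> y \<notin> V \<and> chi_rank \<chi> V y = chi_rank \<chi> V x"
proof -
  have ordered: "(\<forall>k\<in>V. \<not> ((chi_le \<chi> p k \<and> chi_le \<chi> k q) \<or> (chi_le \<chi> q k \<and> chi_le \<chi> k p)))
      \<longleftrightarrow> chi_rank \<chi> V p = chi_rank \<chi> V q"
    if pq: "chi_le \<chi> p q" "p \<notin> V" "q \<notin> V" for p q
  proof -
    have "(chi_le \<chi> p k \<and> chi_le \<chi> k q) \<or> (chi_le \<chi> q k \<and> chi_le \<chi> k p)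
        \<longleftrightarrow> chi_less \<chi> p k \<and> chi_less \<chi> k q" if "k \<in> V" for k
    proof -
      have "k \<noteq> p" "k \<noteq> q" using that pq by auto
      moreover have "\<not> (chi_less \<chi> q k \<and> chi_less \<chi> k p)"
        using pq(1) chi_less_trans[of \<chi> q k p] chi_less_asym[of \<chi> p q] chi_less_irrefl[of \<chi> p]
        unfolding chi_le_def by blast
      ultimately show ?thesis unfolding chi_le_def by blast
    qed
    then show ?thesis using chi_rank_eq_iff[OF V pq(2,1)] by auto
  qed
  show ?thesis
  proof (cases "y \<in> V")
    case True
    then show ?thesis using chi_le_total[of \<chi> x y] unfolding chi_le_def by blast
  next
    case False
    then show ?thesis using ordered[OF _ x False] ordered[OF _ False x] chi_le_total[of \<chi> x y]
      by (auto simp: conj_disj_distribL)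
  qed
qed

lemma sum_Pow_insert:
  assumes "finite A" "x \<notin> A"
  shows "(\<Sum>S\<in>Pow (insert x A). f S) = (\<Sum>S\<in>Pow A. f S) + (\<Sum>S\<in>Pow A. f (insert x S))"
proof -
  have "inj_on (insert x) (Pow A)" using assms(2) by (intro inj_onI) (metis Diff_insert_absorb PowD subsetD)
  then show ?thesis
    unfolding Pow_insert using assms by (subst sum.union_disjoint) (auto simp: sum.reindex)
qed

lemma lprod_Cons: "xs \<noteq> [] \<Longrightarrow> lprod (x # xs) = x * lprod xs"
  by (cases xs) auto

lemma lprod_map_add:
  fixes f g :: "nat \<Rightarrow> 'a::ring"
  assumes "distinct xs" "xs \<noteq> []"
  shows "lprod (map (\<lambda>j. f j + g j) xs) =
    (\<Sum>V\<in>Pow (set xs). lprod (map (\<lambda>j. if j \<in> V then f j else g j) xs))"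
  using assms
proof (induction xs)
  case (Cons x xs)
  let ?h = "\<lambda>V j. if j \<in> V then f j else g j"
  show ?case
  proof (cases "xs = []")
    case True
    have "Pow {x} = {{}, {x}}" by auto
    with True show ?thesis by (simp add: add.commute)
  next
    case False
    have x: "x \<notin> set xs" using Cons.prems by simp
    have same: "map (\<lambda>j. if j = x \<or> j \<in> V then f j else g j) xs = map (?h V) xs" for V
      using x by (intro map_cong) auto
    have "lprod (map (\<lambda>j. f j + g j) (x # xs)) =
        (\<Sum>V\<in>Pow (set xs). g x * lprod (map (?h V) xs)) +
        (\<Sum>V\<in>Pow (set xs). f x * lprod (map (?h V) xs))"
      using Cons False
      by (simp add: lprod_Cons distrib_right sum_distrib_left sum.distrib add.commute)
    also have "\<dots> = (\<Sum>V\<in>Pow (set xs). lprod (map (?h V) (x # xs))) +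
        (\<Sum>V\<in>Pow (set xs). lprod (map (?h (insert x V)) (x # xs)))"
      using x False by (intro arg_cong2[where f = "(+)"] sum.cong) (auto simp: lprod_Cons same)
    also have "\<dots> = (\<Sum>V\<in>Pow (set (x # xs)). lprod (map (?h V) (x # xs)))"
      using x by (simp add: sum_Pow_insert)
    finally show ?thesis .
  qed
qed simp

lemma lin_functional_sum:
  assumes "lin_functional smul \<phi>"
  shows "\<phi> (\<Sum>x\<in>A. f x) = (\<Sum>x\<in>A. \<phi> (f x))"
proof -
  have add: "\<phi> (x + y) = \<phi> x + \<phi> y" for x y
    using assms unfolding lin_functional_def by blast
  then have "\<phi> 0 = 0" by (metis add_0 add_cancel_right_right)
  with add show ?thesis by (induction A rule: infinite_finite_induct) simp_all
qed

abbreviation word_of :: "(nat \<Rightarrow> nat) \<Rightarrow> (nat \<Rightarrow> side) \<Rightarrow> (nat \<Rightarrow> 'a) \<Rightarrow> nat set \<Rightarrow> 'a word" where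
  "word_of \<omega> \<chi> a S \<equiv> map (\<lambda>j. (\<omega> j, \<chi> j, a j)) (sorted_list_of_set S)"

lemma uext_cong:
  "(\<And>j. j \<in> X \<Longrightarrow> lam j = lam' j) \<Longrightarrow> uext \<Phi> \<omega> \<chi> lam a X = uext \<Phi> \<omega> \<chi> lam' a X"
  unfolding uext_def by (intro sum.cong refl arg_cong2[where f = "(*)"] prod.cong) auto

lemma uext_empty: "uext \<Phi> \<omega> \<chi> lam a {} = \<Phi> []"
  unfolding uext_def by simp

lemma uext_scalars_zero:
  assumes "finite X" "\<And>j. j \<in> X \<Longrightarrow> lam j = 0"
  shows "uext \<Phi> \<omega> \<chi> lam a X = \<Phi> (word_of \<omega> \<chi> a X)"
proof -
  have "(\<Prod>j\<in>X - S. lam j) * \<Phi> (word_of \<omega> \<chi> a S) = 0" if "S \<in> Pow X - {X}" for S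
    using that assms by (subst prod_zero) auto
  then have "(\<Sum>S\<in>Pow X - {X}. (\<Prod>j\<in>X - S. lam j) * \<Phi> (word_of \<omega> \<chi> a S)) = 0"
    by (intro sum.neutral ballI)
  then show ?thesis
    unfolding uext_def using assms(1) by (subst sum.remove[of _ X]) auto
qed

lemma uext_affine:
  assumes "finite J" "j \<in> J"
  shows "uext \<Phi> \<omega> \<chi> lam a J =
    lam j * uext \<Phi> \<omega> \<chi> lam a (J - {j}) + uext \<Phi> \<omega> \<chi> (lam(j := 0)) a J"
proof -
  let ?J = "J - {j}"
  let ?w = "\<lambda>S. \<Phi> (word_of \<omega> \<chi> a S)"
  have fin: "finite ?J" using assms by simp
  have split: "uext \<Phi> \<omega> \<chi> l a J = (\<Sum>S\<in>Pow ?J. l j * ((\<Prod>i\<in>?J - S. l i) * ?w S))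
      + (\<Sum>S\<in>Pow ?J. (\<Prod>i\<in>?J - S. l i) * ?w (insert j S))" for l
  proof -
    have "uext \<Phi> \<omega> \<chi> l a J = (\<Sum>S\<in>Pow (insert j ?J). (\<Prod>i\<in>J - S. l i) * ?w S)"
      unfolding uext_def insert_Diff[OF assms(2)] ..
    also have "\<dots> = (\<Sum>S\<in>Pow ?J. (\<Prod>i\<in>J - S. l i) * ?w S)
        + (\<Sum>S\<in>Pow ?J. (\<Prod>i\<in>J - insert j S. l i) * ?w (insert j S))"
      using fin by (rule sum_Pow_insert) simp
    also have "(\<Sum>S\<in>Pow ?J. (\<Prod>i\<in>J - S. l i) * ?w S)
        = (\<Sum>S\<in>Pow ?J. l j * ((\<Prod>i\<in>?J - S. l i) * ?w S))"
    proof (rule sum.cong)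
      fix S assume "S \<in> Pow ?J"
      then have "J - S = insert j (?J - S)" using assms by auto
      then show "(\<Prod>i\<in>J - S. l i) * ?w S = l j * ((\<Prod>i\<in>?J - S. l i) * ?w S)"
        using fin by (simp only: prod.insert finite_Diff Diff_iff singleton_iff not_True_eq_False
          simp_thms mult.assoc)
    qed simp
    also have "(\<Sum>S\<in>Pow ?J. (\<Prod>i\<in>J - insert j S. l i) * ?w (insert j S))
        = (\<Sum>S\<in>Pow ?J. (\<Prod>i\<in>?J - S. l i) * ?w (insert j S))"
      by (intro sum.cong refl arg_cong2[where f = "(*)"] prod.cong) blast+
    finally show ?thesis .
  qed
  have "(\<Prod>i\<in>?J - S. (lam(j := 0)) i) = (\<Prod>i\<in>?J - S. lam i)" for S
    by (intro prod.cong) auto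
  then show ?thesis
    unfolding split[of lam] split[of "lam(j := 0)"] by (simp add: uext_def sum_distrib_left)
qed

lemma uext_attains:
  assumes "\<Phi> [] = 1" "finite S" "S \<noteq> {}"
  shows "\<exists>lam. uext \<Phi> \<omega> \<chi> lam a S = c"
  using assms(2,3)
proof (induction S arbitrary: c rule: finite_ne_induct)
  have extend: "\<exists>l. uext \<Phi> \<omega> \<chi> l a (insert j S) = c"
    if "finite S" "j \<notin> S" "uext \<Phi> \<omega> \<chi> lam a S \<noteq> 0" for S j lam c
  proof -
    let ?U = "uext \<Phi> \<omega> \<chi> lam a S"
    let ?R = "uext \<Phi> \<omega> \<chi> (lam(j := 0)) a (insert j S)"
    define l where "l = lam(j := (c - ?R) / ?U)"
    have "uext \<Phi> \<omega> \<chi> l a S = ?U" using that by (intro uext_cong) (auto simp: l_def)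
    then have "uext \<Phi> \<omega> \<chi> l a (insert j S) = (c - ?R) / ?U * ?U + ?R"
      using uext_affine[of "insert j S" j \<Phi> \<omega> \<chi> l a] that by (simp add: l_def)
    then show ?thesis using that by auto
  qed
  {
    case (singleton j)
    show ?case using extend[of "{}"] assms(1) by (simp add: uext_empty)
  next
    case (insert j S)
    then show ?case using extend insert.IH[of 1] by (metis one_neq_zero)
  }
qed

lemma sorted_list_of_set_image_strict_mono:
  fixes e :: "nat \<Rightarrow> nat"
  assumes mono: "strict_mono_on A e" and S: "S \<subseteq> A" "finite S"
  shows "sorted_list_of_set (e ` S) = map e (sorted_list_of_set S)"
proof (rule sorted_list_of_set_unique[THEN iffD1])
  let ?l = "sorted_list_of_set S"
  have "sorted_wrt (<) (map e ?l)"
    unfolding sorted_wrt_map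
    by (rule sorted_wrt_mono_rel[OF _ strict_sorted_list_of_set])
       (use S in \<open>auto intro: strict_mono_onD[OF mono]\<close>)
  moreover have "card (e ` S) = card S"
    using S by (intro card_image inj_on_subset[OF strict_mono_on_imp_inj_on[OF mono]])
  ultimately show "sorted_wrt (<) (map e ?l) \<and> set (map e ?l) = e ` S \<and>
      length (map e ?l) = card (e ` S)"
    using S by simp
qed (use S in simp)

lemma uext_reindex:
  fixes e :: "nat \<Rightarrow> nat"
  assumes mono: "strict_mono_on A e" and X: "X \<subseteq> A" "finite X"
  shows "uext \<Phi> (\<lambda>i. \<omega> (e i)) (\<lambda>i. \<chi> (e i)) (\<lambda>i. lam (e i)) (\<lambda>i. a (e i)) X =
    uext \<Phi> \<omega> \<chi> lam a (e ` X)"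
proof -
  have inj: "inj_on e X" using X strict_mono_on_imp_inj_on[OF mono] inj_on_subset by blast
  have "uext \<Phi> \<omega> \<chi> lam a (e ` X) =
      (\<Sum>S\<in>Pow X. (\<Prod>j\<in>e ` X - e ` S. lam j) * \<Phi> (word_of \<omega> \<chi> a (e ` S)))"
    unfolding uext_def image_Pow_surj[OF refl, of e X, symmetric]
      sum.reindex[OF inj_on_image_Pow[OF inj]] by (simp add: comp_def)
  also have "\<dots> = uext \<Phi> (\<lambda>i. \<omega> (e i)) (\<lambda>i. \<chi> (e i)) (\<lambda>i. lam (e i)) (\<lambda>i. a (e i)) X"
    unfolding uext_def
  proof (intro sum.cong refl arg_cong2[where f = "(*)"])
    fix S assume S: "S \<in> Pow X"
    have "e ` X - e ` S = e ` (X - S)" using inj S by (auto simp: inj_on_def)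
    then show "(\<Prod>j\<in>e ` X - e ` S. lam j) = (\<Prod>j\<in>X - S. lam (e j))"
      using inj by (simp add: prod.reindex inj_on_diff)
    show "\<Phi> (word_of \<omega> \<chi> a (e ` S)) = \<Phi> (word_of (\<lambda>i. \<omega> (e i)) (\<lambda>i. \<chi> (e i)) (\<lambda>i. a (e i)) S)"
      using S X by (subst sorted_list_of_set_image_strict_mono[OF mono]) (auto simp: comp_def dest: finite_subset)
  qed
  finally show ?thesis by simp
qed

text \<open>The c-bi-free factorisation is stated for words indexed by {1..m}; the increasing
  enumeration enum J transports it to words indexed by a finite set J.\<close>

definition enum :: "nat set \<Rightarrow> nat \<Rightarrow> nat" where
  "enum J i = sorted_list_of_set J ! (i - 1)"

lemma strict_mono_on_enum: "strict_mono_on {1..card J} (enum J)"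
proof (rule strict_mono_onI)
  fix i j assume "i \<in> {1..card J}" "j \<in> {1..card J}" "i < j"
  then have "i - 1 < j - 1" "j - 1 < length (sorted_list_of_set J)" by auto
  then show "enum J i < enum J j"
    unfolding enum_def by (rule sorted_wrt_nth_less[OF strict_sorted_list_of_set])
qed

lemma enum_image:
  assumes "finite J"
  shows "enum J ` {1..card J} = J"
proof -
  have "{1..card J} = Suc ` {..<length (sorted_list_of_set J)}"
    by (simp add: image_Suc_lessThan)
  then have "enum J ` {1..card J} = set (sorted_list_of_set J)"
    by (auto simp: enum_def image_image in_set_conv_nth)
  then show ?thesis using assms by simp
qed

lemma same_block_enum_iff:
  assumes J: "finite J" and ij: "i \<in> {1..card J}" "j \<in> {1..card J}"
  shows "same_block (card J) (\<lambda>k. \<chi> (enum J k)) (\<lambda>k. \<omega> (enum J k)) i j \<longleftrightarrow>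
    (\<forall>k\<in>J. (chi_le \<chi> (enum J i) k \<and> chi_le \<chi> k (enum J j)) \<or>
            (chi_le \<chi> (enum J j) k \<and> chi_le \<chi> k (enum J i)) \<longrightarrow> \<omega> k = \<omega> (enum J i))"
proof -
  let ?e = "enum J"
  let ?P = "\<lambda>k. (chi_le \<chi> (?e i) k \<and> chi_le \<chi> k (?e j)) \<or>
    (chi_le \<chi> (?e j) k \<and> chi_le \<chi> k (?e i)) \<longrightarrow> \<omega> k = \<omega> (?e i)"
  have "same_block (card J) (\<lambda>k. \<chi> (?e k)) (\<lambda>k. \<omega> (?e k)) i j \<longleftrightarrow>
      (\<forall>k\<in>{1..card J}. ?P (?e k))"
    unfolding same_block_def using ij chi_le_reindex[OF strict_mono_on_enum] by auto
  also have "\<dots> \<longleftrightarrow> (\<forall>k\<in>?e ` {1..card J}. ?P k)" by simp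
  finally show ?thesis unfolding enum_image[OF J] .
qed

lemma pi_blocks_subset: "X \<in> pi_blocks m \<chi> \<omega> \<Longrightarrow> X \<subseteq> {1..m}"
  unfolding pi_blocks_def by auto

lemma finite_pi_blocks: "finite (pi_blocks m \<chi> \<omega>)"
  unfolding pi_blocks_def by simp

lemma same_block_refl: "same_block m \<chi> \<omega> i i"
  unfolding same_block_def chi_le_def using chi_less_asym by blast

text \<open>\<Phi> and \<Psi> are the two functionals, evaluated on words, of the c-bi-free product that
  defines the bi-monotonic product: the first pair carries (\<phi>_1, \<delta>_1), the second one
  (\<phi>_2, \<phi>_2).\<close>

locale bimonotone_functionals =
  fixes \<phi> :: "'a::ring \<Rightarrow> complex" and Alg :: "nat \<Rightarrow> side \<Rightarrow> 'a set"
    and \<Phi> \<Psi> :: "'a word \<Rightarrow> complex"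
  assumes Phi_Nil: "\<Phi> [] = 1" and Psi_Nil: "\<Psi> [] = 1"
    and Phi_word: "\<And>w. valid_word Alg w \<Longrightarrow> w \<noteq> [] \<Longrightarrow> \<Phi> w = \<phi> (lprod (map (snd \<circ> snd) w))"
    and Psi_first: "\<And>w. valid_word Alg w \<Longrightarrow> w \<noteq> [] \<Longrightarrow> \<forall>x\<in>set w. fst x = 1 \<Longrightarrow> \<Psi> w = 0"
    and Psi_second: "\<And>w. valid_word Alg w \<Longrightarrow> w \<noteq> [] \<Longrightarrow> \<forall>x\<in>set w. fst x = 2 \<Longrightarrow>
      \<Psi> w = \<phi> (lprod (map (snd \<circ> snd) w))"
    and cbifree: "\<And>m \<omega> \<chi> lam a. m \<ge> 1 \<Longrightarrow>
      \<forall>j\<in>{1..m}. \<omega> j \<in> {1, 2} \<and> a j \<in> Alg (\<omega> j) (\<chi> j) \<Longrightarrow>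
      \<forall>X\<in>pi_blocks m \<chi> \<omega>. uext \<Psi> \<omega> \<chi> lam a X = 0 \<Longrightarrow>
      uext \<Phi> \<omega> \<chi> lam a {1..m} = (\<Prod>X\<in>pi_blocks m \<chi> \<omega>. uext \<Phi> \<omega> \<chi> lam a X)"

lemma bimono_indep_imp_bimonotone_functionals:
  assumes "bimono_indep smul \<phi> A1l A1r A2l A2r"
  obtains \<Phi> \<Psi> where "bimonotone_functionals \<phi> (alg4 A1l A1r A2l A2r) \<Phi> \<Psi>"
proof -
  let ?Alg = "alg4 A1l A1r A2l A2r"
  obtain \<Phi> \<Psi> where cb: "bimono_cbifree smul \<phi> ?Alg \<Phi> \<Psi>"
    and agree: "\<And>w. valid_word ?Alg w \<Longrightarrow> w \<noteq> [] \<Longrightarrow> \<phi> (lprod (map (snd \<circ> snd) w)) = \<Phi> w"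
    using assms unfolding bimono_indep_def by blast
  have "bimonotone_functionals \<phi> ?Alg \<Phi> \<Psi>"
  proof
    show "\<Phi> [] = 1" "\<Psi> [] = 1"
      using cb unfolding bimono_cbifree_def word_functional_def by simp_all
    show "\<Phi> w = \<phi> (lprod (map (snd \<circ> snd) w))" if "valid_word ?Alg w" "w \<noteq> []" for w
      using agree[OF that] by simp
  qed (use cb in \<open>unfold bimono_cbifree_def, blast+\<close>)
  then show thesis by (rule that)
qed

context bimonotone_functionals
begin

lemma uext_factor_subset:
  fixes J :: "nat set" and \<omega> :: "nat \<Rightarrow> nat" and \<chi> :: "nat \<Rightarrow> side"
  defines "blocks \<equiv> pi_blocks (card J) (\<lambda>k. \<chi> (enum J k)) (\<lambda>k. \<omega> (enum J k))"
  assumes J: "finite J" "J \<noteq> {}"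
    and letters: "\<forall>j\<in>J. \<omega> j \<in> {1, 2} \<and> a j \<in> Alg (\<omega> j) (\<chi> j)"
    and Psi_blocks: "\<forall>X\<in>blocks. uext \<Psi> \<omega> \<chi> lam a (enum J ` X) = 0"
  shows "uext \<Phi> \<omega> \<chi> lam a J = (\<Prod>X\<in>blocks. uext \<Phi> \<omega> \<chi> lam a (enum J ` X))"
proof -
  let ?e = "enum J"
  have reindex: "uext \<Theta> (\<lambda>k. \<omega> (?e k)) (\<lambda>k. \<chi> (?e k)) (\<lambda>k. lam (?e k)) (\<lambda>k. a (?e k)) X
      = uext \<Theta> \<omega> \<chi> lam a (?e ` X)" if "X \<subseteq> {1..card J}" for X \<Theta>
    using uext_reindex[OF strict_mono_on_enum that] that finite_subset by blast
  have "uext \<Phi> \<omega> \<chi> lam a J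
      = uext \<Phi> (\<lambda>k. \<omega> (?e k)) (\<lambda>k. \<chi> (?e k)) (\<lambda>k. lam (?e k)) (\<lambda>k. a (?e k)) {1..card J}"
    using reindex[of "{1..card J}"] enum_image[OF J(1)] by simp
  also have "\<dots> = (\<Prod>X\<in>blocks.
      uext \<Phi> (\<lambda>k. \<omega> (?e k)) (\<lambda>k. \<chi> (?e k)) (\<lambda>k. lam (?e k)) (\<lambda>k. a (?e k)) X)"
    unfolding blocks_def
  proof (rule cbifree)
    show "card J \<ge> 1" using J by (simp add: Suc_leI card_gt_0_iff)
    show "\<forall>j\<in>{1..card J}. \<omega> (?e j) \<in> {1, 2} \<and> a (?e j) \<in> Alg (\<omega> (?e j)) (\<chi> (?e j))"
      using letters enum_image[OF J(1)] by blast
    show "\<forall>X\<in>pi_blocks (card J) (\<lambda>k. \<chi> (?e k)) (\<lambda>k. \<omega> (?e k)).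
        uext \<Psi> (\<lambda>k. \<omega> (?e k)) (\<lambda>k. \<chi> (?e k)) (\<lambda>k. lam (?e k)) (\<lambda>k. a (?e k)) X = 0"
    proof
      fix X assume "X \<in> pi_blocks (card J) (\<lambda>k. \<chi> (?e k)) (\<lambda>k. \<omega> (?e k))"
      then show "uext \<Psi> (\<lambda>k. \<omega> (?e k)) (\<lambda>k. \<chi> (?e k)) (\<lambda>k. lam (?e k)) (\<lambda>k. a (?e k)) X = 0"
        using Psi_blocks reindex[OF pi_blocks_subset] unfolding blocks_def by simp
    qed
  qed
  also have "\<dots> = (\<Prod>X\<in>blocks. uext \<Phi> \<omega> \<chi> lam a (?e ` X))"
    using reindex pi_blocks_subset unfolding blocks_def by (intro prod.cong) auto
  finally show ?thesis .
qed

lemma Phi_eq_Psi_second: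
  "valid_word Alg w \<Longrightarrow> \<forall>x\<in>set w. fst x = 2 \<Longrightarrow> \<Phi> w = \<Psi> w"
  using Phi_Nil Psi_Nil Phi_word Psi_second by (cases "w = []") auto

end

locale bimonotone_split = bimonotone_functionals +
  fixes n :: nat and \<chi> :: "nat \<Rightarrow> side" and V :: "nat set"
    and \<omega> :: "nat \<Rightarrow> nat" and a :: "nat \<Rightarrow> 'a::ring"
  assumes V_subset: "V \<subseteq> {1..n}"
    and omega_def: "\<omega> = (\<lambda>j. if j \<in> V then 1 else 2)"
    and letters: "\<forall>j\<in>{1..n}. a j \<in> Alg (\<omega> j) (\<chi> j)"
begin

abbreviation gap :: "nat \<Rightarrow> nat set" where
  "gap t \<equiv> chi_gap \<chi> n V t"

lemma finite_V: "finite V"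
  using V_subset finite_subset by blast

lemma omega_range: "\<omega> j \<in> {1, 2}"
  by (simp add: omega_def)

lemma valid_word_of:
  assumes "S \<subseteq> {1..n}"
  shows "valid_word Alg (word_of \<omega> \<chi> a S)"
  unfolding valid_word_def using omega_range letters assms finite_subset[OF assms] by auto

lemma Phi_word_of:
  assumes "S \<subseteq> {1..n}"
  shows "\<Phi> (word_of \<omega> \<chi> a S) = phiprod \<phi> (map a (sorted_list_of_set S))"
  using assms Phi_Nil Phi_word[OF valid_word_of[OF assms]] finite_subset[OF assms]
  by (auto simp: phiprod_def comp_def)

lemma uext_Phi_eq_Psi_off_V:
  assumes "S \<subseteq> {1..n} - V"
  shows "uext \<Phi> \<omega> \<chi> lam a S = uext \<Psi> \<omega> \<chi> lam a S"
  unfolding uext_def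
proof (intro sum.cong refl arg_cong2[where f = "(*)"] Phi_eq_Psi_second)
  fix T assume "T \<in> Pow S"
  with assms have T: "T \<subseteq> {1..n} - V" by blast
  then show "valid_word Alg (word_of \<omega> \<chi> a T)" by (intro valid_word_of) blast
  have "finite T" using T finite_subset by blast
  then show "\<forall>x\<in>set (word_of \<omega> \<chi> a T). fst x = 2"
    using T by (auto simp: omega_def)
qed

lemma uext_Psi_in_V:
  assumes "S \<subseteq> V" "S \<noteq> {}" "\<And>j. j \<in> S \<Longrightarrow> lam j = 0"
  shows "uext \<Psi> \<omega> \<chi> lam a S = 0"
proof -
  have "finite S" using assms finite_V finite_subset by blast
  then have "uext \<Psi> \<omega> \<chi> lam a S = \<Psi> (word_of \<omega> \<chi> a S)"
    using assms(3) by (rule uext_scalars_zero)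
  also have "\<dots> = 0"
    using \<open>finite S\<close> assms V_subset valid_word_of[of S] by (intro Psi_first) (auto simp: omega_def)
  finally show ?thesis .
qed

lemma block_subset_V:
  assumes "finite J" "i \<in> {1..card J}" "enum J i \<in> V"
    and "same_block (card J) (\<lambda>k. \<chi> (enum J k)) (\<lambda>k. \<omega> (enum J k)) i j" "j \<in> {1..card J}"
  shows "enum J j \<in> V"
proof -
  let ?c = "\<lambda>k. \<chi> (enum J k)"
  have "(chi_le ?c i j \<and> chi_le ?c j j) \<or> (chi_le ?c j j \<and> chi_le ?c j i)"
    using chi_le_total[of ?c i j] by (simp add: chi_le_def)
  then have "\<omega> (enum J j) = \<omega> (enum J i)" using assms(4,5) unfolding same_block_def by blast
  then show ?thesis using assms(3) by (simp add: omega_def split: if_splits)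
qed

lemma block_off_V_eq_gap:
  assumes J: "V \<subseteq> J" "J \<subseteq> {1..n}" and i: "i \<in> {1..card J}" and x: "enum J i \<notin> V"
  shows "enum J ` {j\<in>{1..card J}. same_block (card J) (\<lambda>k. \<chi> (enum J k)) (\<lambda>k. \<omega> (enum J k)) i j}
     = gap (chi_rank \<chi> V (enum J i)) \<inter> J"
proof -
  let ?e = "enum J"
  have fin: "finite J" using J finite_subset by blast
  have same_block_iff: "same_block (card J) (\<lambda>k. \<chi> (?e k)) (\<lambda>k. \<omega> (?e k)) i j \<longleftrightarrow>
      ?e j \<notin> V \<and> chi_rank \<chi> V (?e j) = chi_rank \<chi> V (?e i)" if "j \<in> {1..card J}" for j
    unfolding same_block_enum_iff[OF fin i that]
      chi_rank_eq_iff_none_between[OF finite_V x, symmetric]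
    using J(1) x by (auto simp: omega_def)
  show ?thesis
  proof (intro set_eqI iffI)
    fix y assume "y \<in> ?e ` {j\<in>{1..card J}. same_block (card J) (\<lambda>k. \<chi> (?e k)) (\<lambda>k. \<omega> (?e k)) i j}"
    then obtain j where j: "j \<in> {1..card J}" "same_block (card J) (\<lambda>k. \<chi> (?e k)) (\<lambda>k. \<omega> (?e k)) i j"
      and y: "y = ?e j" by blast
    have "y \<in> J" using enum_image[OF fin] j(1) y by blast
    then show "y \<in> gap (chi_rank \<chi> V (?e i)) \<inter> J"
      using same_block_iff[OF j(1)] j(2) y J(2) unfolding chi_gap_def by auto
  next
    fix y assume y: "y \<in> gap (chi_rank \<chi> V (?e i)) \<inter> J"
    then obtain j where j: "j \<in> {1..card J}" "y = ?e j" using enum_image[OF fin] by blast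
    then show "y \<in> ?e ` {j\<in>{1..card J}. same_block (card J) (\<lambda>k. \<chi> (?e k)) (\<lambda>k. \<omega> (?e k)) i j}"
      using same_block_iff[OF j(1)] y unfolding chi_gap_def by auto
  qed
qed

lemma enum_block_shape:
  assumes J: "V \<subseteq> J" "J \<subseteq> {1..n}"
    and X: "X \<in> pi_blocks (card J) (\<lambda>k. \<chi> (enum J k)) (\<lambda>k. \<omega> (enum J k))"
  shows "enum J ` X \<noteq> {}" and "enum J ` X \<subseteq> V \<or> (\<exists>t. enum J ` X = gap t \<inter> J)"
proof -
  have fin: "finite J" using J finite_subset by blast
  obtain i where i: "i \<in> {1..card J}"
    and X_eq: "X = {j\<in>{1..card J}. same_block (card J) (\<lambda>k. \<chi> (enum J k)) (\<lambda>k. \<omega> (enum J k)) i j}"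
    using X unfolding pi_blocks_def by blast
  show "enum J ` X \<noteq> {}" using i same_block_refl unfolding X_eq by blast
  show "enum J ` X \<subseteq> V \<or> (\<exists>t. enum J ` X = gap t \<inter> J)"
  proof (cases "enum J i \<in> V")
    case True
    then show ?thesis using block_subset_V[OF fin i True] unfolding X_eq by blast
  next
    case False
    then show ?thesis using block_off_V_eq_gap[OF J i False] unfolding X_eq by blast
  qed
qed

lemma uext_Psi_enum_blocks:
  assumes J: "V \<subseteq> J" "J \<subseteq> {1..n}"
    and lam_V: "\<forall>i\<in>V. lam i = 0"
    and Psi_gaps: "\<forall>t. gap t \<inter> J \<noteq> {} \<longrightarrow> uext \<Psi> \<omega> \<chi> lam a (gap t \<inter> J) = 0"
  shows "\<forall>X\<in>pi_blocks (card J) (\<lambda>k. \<chi> (enum J k)) (\<lambda>k. \<omega> (enum J k)).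
    uext \<Psi> \<omega> \<chi> lam a (enum J ` X) = 0"
proof
  fix X assume X: "X \<in> pi_blocks (card J) (\<lambda>k. \<chi> (enum J k)) (\<lambda>k. \<omega> (enum J k))"
  have "enum J ` X \<noteq> {}" by (rule enum_block_shape(1)[OF J X])
  consider "enum J ` X \<subseteq> V" | t where "enum J ` X = gap t \<inter> J"
    using enum_block_shape(2)[OF J X] by blast
  then show "uext \<Psi> \<omega> \<chi> lam a (enum J ` X) = 0"
  proof cases
    case 1
    with \<open>enum J ` X \<noteq> {}\<close> show ?thesis using lam_V by (intro uext_Psi_in_V) auto
  next
    case 2
    with \<open>enum J ` X \<noteq> {}\<close> show ?thesis using Psi_gaps by simp
  qed
qed

lemma uext_Phi_vanishes:
  assumes J: "V \<subseteq> J" "J \<subseteq> {1..n}" and j: "j \<in> J" "j \<notin> V"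
    and lam_V: "\<forall>i\<in>V. lam i = 0"
    and Psi_gaps: "\<forall>t. gap t \<inter> J \<noteq> {} \<longrightarrow> uext \<Psi> \<omega> \<chi> lam a (gap t \<inter> J) = 0"
  shows "uext \<Phi> \<omega> \<chi> lam a J = 0"
proof -
  let ?e = "enum J"
  let ?blocks = "pi_blocks (card J) (\<lambda>k. \<chi> (?e k)) (\<lambda>k. \<omega> (?e k))"
  have fin: "finite J" using J finite_subset by blast
  have Psi_blocks: "\<forall>X\<in>?blocks. uext \<Psi> \<omega> \<chi> lam a (?e ` X) = 0"
    using J lam_V Psi_gaps by (rule uext_Psi_enum_blocks)
  have letters_J: "\<forall>i\<in>J. \<omega> i \<in> {1, 2} \<and> a i \<in> Alg (\<omega> i) (\<chi> i)"
    using omega_range letters J(2) by auto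
  have "j \<in> ?e ` {1..card J}" using enum_image[OF fin] j(1) by simp
  then obtain i where "j = ?e i" "i \<in> {1..card J}" by (rule imageE)
  then have i: "i \<in> {1..card J}" "?e i = j" by simp_all
  let ?X = "{k\<in>{1..card J}. same_block (card J) (\<lambda>k. \<chi> (?e k)) (\<lambda>k. \<omega> (?e k)) i k}"
  have X: "?X \<in> ?blocks" unfolding pi_blocks_def using i(1) by blast
  have gap_X: "?e ` ?X = gap (chi_rank \<chi> V j) \<inter> J"
    using block_off_V_eq_gap[OF J i(1)] i j by simp
  have "j \<in> gap (chi_rank \<chi> V j) \<inter> J" using j J unfolding chi_gap_def by auto
  then have "uext \<Psi> \<omega> \<chi> lam a (gap (chi_rank \<chi> V j) \<inter> J) = 0" using Psi_gaps by blast
  moreover have "uext \<Phi> \<omega> \<chi> lam a (gap (chi_rank \<chi> V j) \<inter> J) =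
      uext \<Psi> \<omega> \<chi> lam a (gap (chi_rank \<chi> V j) \<inter> J)"
    using chi_gap_subset by (intro uext_Phi_eq_Psi_off_V) blast
  ultimately have "uext \<Phi> \<omega> \<chi> lam a (?e ` ?X) = 0" unfolding gap_X by simp
  with X have "(\<Prod>X\<in>?blocks. uext \<Phi> \<omega> \<chi> lam a (?e ` X)) = 0"
    by (intro prod_zero finite_pi_blocks bexI)
  moreover have "J \<noteq> {}" using j by blast
  ultimately show ?thesis
    using uext_factor_subset[OF fin _ letters_J Psi_blocks] by simp
qed

lemma exists_scalars_Psi_gaps_vanish:
  assumes J: "J \<subseteq> {1..n}"
  obtains lam where "\<forall>i\<in>V. lam i = 0"
    "\<forall>t. gap t \<inter> J \<noteq> {} \<longrightarrow> uext \<Psi> \<omega> \<chi> lam a (gap t \<inter> J) = 0"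
proof -
  define L where "L t = (SOME l. uext \<Psi> \<omega> \<chi> l a (gap t \<inter> J) = 0)" for t
  define lam where "lam i = (if i \<notin> V then L (chi_rank \<chi> V i) i else 0)" for i
  have "uext \<Psi> \<omega> \<chi> lam a (gap t \<inter> J) = 0" if "gap t \<inter> J \<noteq> {}" for t
  proof -
    have "\<exists>l. uext \<Psi> \<omega> \<chi> l a (gap t \<inter> J) = 0"
      using Psi_Nil J that finite_subset by (intro uext_attains[where \<Phi> = \<Psi>]) auto
    then have "uext \<Psi> \<omega> \<chi> (L t) a (gap t \<inter> J) = 0"
      unfolding L_def by (rule someI_ex)
    moreover have "uext \<Psi> \<omega> \<chi> lam a (gap t \<inter> J) = uext \<Psi> \<omega> \<chi> (L t) a (gap t \<inter> J)"
      by (intro uext_cong) (auto simp: lam_def chi_gap_def)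
    ultimately show ?thesis by simp
  qed
  moreover have "\<forall>i\<in>V. lam i = 0" by (simp add: lam_def)
  ultimately show thesis using that by blast
qed

definition factor_defect :: "nat set \<Rightarrow> (nat \<Rightarrow> complex) \<Rightarrow> complex" where
  "factor_defect J lam = uext \<Phi> \<omega> \<chi> lam a J -
     \<Phi> (word_of \<omega> \<chi> a V) * (\<Prod>t\<in>{0..card V}. uext \<Phi> \<omega> \<chi> lam a (gap t \<inter> J))"

lemma factor_defect_cong:
  "(\<And>i. i \<in> J \<Longrightarrow> lam i = lam' i) \<Longrightarrow> factor_defect J lam = factor_defect J lam'"
  unfolding factor_defect_def by (intro arg_cong2[where f = "(-)"] uext_cong
      arg_cong2[where f = "(*)"] refl prod.cong) auto

lemma factor_defect_affine:
  assumes J: "finite J" "J \<subseteq> {1..n}" and j: "j \<in> J" "j \<notin> V"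
  shows "factor_defect J lam =
    lam j * factor_defect (J - {j}) lam + factor_defect J (lam(j := 0))"
proof -
  let ?t = "chi_rank \<chi> V j"
  let ?T = "{0..card V}"
  let ?P = "\<Prod>t\<in>?T - {?t}. uext \<Phi> \<omega> \<chi> lam a (gap t \<inter> J)"
  have t: "?t \<in> ?T" using chi_rank_le_card[OF finite_V] by simp
  have j_gap: "j \<in> gap ?t \<inter> J" using j J unfolding chi_gap_def by auto
  have other_gaps: "j \<notin> gap t" if "t \<noteq> ?t" for t using that unfolding chi_gap_def by auto
  have split_prod: "(\<Prod>t\<in>?T. uext \<Phi> \<omega> \<chi> l a (gap t \<inter> K)) =
      uext \<Phi> \<omega> \<chi> l a (gap ?t \<inter> K) * ?P"
    if "\<And>t. t \<noteq> ?t \<Longrightarrow> uext \<Phi> \<omega> \<chi> l a (gap t \<inter> K) = uext \<Phi> \<omega> \<chi> lam a (gap t \<inter> J)"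
    for l K
    using that by (subst prod.remove[OF _ t]) (auto intro!: prod.cong)
  have defect_smaller: "factor_defect (J - {j}) lam = uext \<Phi> \<omega> \<chi> lam a (J - {j}) -
      \<Phi> (word_of \<omega> \<chi> a V) * (uext \<Phi> \<omega> \<chi> lam a (gap ?t \<inter> J - {j}) * ?P)"
    unfolding factor_defect_def
    by (subst split_prod) (use other_gaps in \<open>auto simp: Int_Diff intro!: arg_cong[where f = "uext _ _ _ _ _"]\<close>)
  have defect_zeroed: "factor_defect J (lam(j := 0)) = uext \<Phi> \<omega> \<chi> (lam(j := 0)) a J -
      \<Phi> (word_of \<omega> \<chi> a V) * (uext \<Phi> \<omega> \<chi> (lam(j := 0)) a (gap ?t \<inter> J) * ?P)"
    unfolding factor_defect_def
    by (subst split_prod) (use other_gaps in \<open>auto intro!: uext_cong\<close>)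
  have defect: "factor_defect J lam = uext \<Phi> \<omega> \<chi> lam a J -
      \<Phi> (word_of \<omega> \<chi> a V) * (uext \<Phi> \<omega> \<chi> lam a (gap ?t \<inter> J) * ?P)"
    unfolding factor_defect_def by (subst split_prod) auto
  have fin_gap: "finite (gap ?t \<inter> J)" using J(1) by simp
  show ?thesis
    unfolding defect defect_smaller defect_zeroed uext_affine[OF J(1) j(1), of \<Phi> \<omega> \<chi> lam a]
      uext_affine[OF fin_gap j_gap, of \<Phi> \<omega> \<chi> lam a]
    by (simp add: algebra_simps)
qed

lemma factor_defect_independent:
  assumes J: "finite J" "J \<subseteq> {1..n}"
    and smaller: "\<And>j l. j \<in> J - V \<Longrightarrow> \<forall>i\<in>V. l i = 0 \<Longrightarrow> factor_defect (J - {j}) l = 0"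
    and lam: "\<forall>i\<in>V. lam i = 0"
  shows "factor_defect J lam = factor_defect J (\<lambda>_. 0)"
proof -
  have "K \<subseteq> J - V \<Longrightarrow> factor_defect J lam = factor_defect J (\<lambda>i. if i \<in> K then 0 else lam i)"
    for K
  proof (induction K rule: infinite_finite_induct)
    case (infinite K)
    then show ?case using J(1) finite_subset by blast
  next
    case (insert k K)
    let ?l = "\<lambda>i. if i \<in> K then 0 else lam i"
    have "factor_defect J lam = factor_defect J ?l" using insert by blast
    also have "\<dots> = factor_defect J (?l(k := 0))"
      using factor_defect_affine[OF J, of k ?l] smaller[of k ?l] insert.prems lam by simp
    also have "?l(k := 0) = (\<lambda>i. if i \<in> insert k K then 0 else lam i)" by auto
    finally show ?case .
  qed simp
  from this[OF subset_refl] have "factor_defect J lam =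
      factor_defect J (\<lambda>i. if i \<in> J - V then 0 else lam i)" .
  also have "\<dots> = factor_defect J (\<lambda>_. 0)" using lam by (intro factor_defect_cong) auto
  finally show ?thesis .
qed

lemma factor_defect_eq_zero:
  assumes "finite J" "V \<subseteq> J" "J \<subseteq> {1..n}" "\<forall>i\<in>V. lam i = 0"
  shows "factor_defect J lam = 0"
  using assms
proof (induction J arbitrary: lam rule: finite_psubset_induct)
  case (psubset J)
  show ?case
  proof (cases "J \<subseteq> V")
    case True
    then have "J = V" "gap t \<inter> J = {}" for t using psubset.prems chi_gap_subset by blast+
    then show ?thesis
      using psubset.prems(3) finite_V Phi_Nil by (simp add: factor_defect_def uext_scalars_zero uext_empty)
  next
    case False
    then obtain j where j: "j \<in> J" "j \<notin> V" by blast
    obtain l where l: "\<forall>i\<in>V. l i = 0"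
      "\<forall>t. gap t \<inter> J \<noteq> {} \<longrightarrow> uext \<Psi> \<omega> \<chi> l a (gap t \<inter> J) = 0"
      using exists_scalars_Psi_gaps_vanish[OF psubset.prems(2)] by blast
    have "j \<in> gap (chi_rank \<chi> V j) \<inter> J" using j psubset.prems unfolding chi_gap_def by auto
    then have "uext \<Psi> \<omega> \<chi> l a (gap (chi_rank \<chi> V j) \<inter> J) = 0" using l(2) by blast
    moreover have "uext \<Phi> \<omega> \<chi> l a (gap (chi_rank \<chi> V j) \<inter> J) =
        uext \<Psi> \<omega> \<chi> l a (gap (chi_rank \<chi> V j) \<inter> J)"
      using chi_gap_subset by (intro uext_Phi_eq_Psi_off_V) blast
    ultimately have "uext \<Phi> \<omega> \<chi> l a (gap (chi_rank \<chi> V j) \<inter> J) = 0" by simp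
    then have "(\<Prod>t\<in>{0..card V}. uext \<Phi> \<omega> \<chi> l a (gap t \<inter> J)) = 0"
      using chi_rank_le_card[OF finite_V, of \<chi> j] by (intro prod_zero) auto
    then have l_zero: "factor_defect J l = 0"
      using uext_Phi_vanishes[OF psubset.prems(1,2) j l] by (simp add: factor_defect_def)
    have smaller: "factor_defect (J - {j'}) l' = 0" if "j' \<in> J - V" "\<forall>i\<in>V. l' i = 0" for j' l'
      using that psubset.prems by (intro psubset.IH) auto
    have "factor_defect J lam = factor_defect J (\<lambda>_. 0)"
      using psubset.hyps(1) psubset.prems(2) smaller psubset.prems(3) by (rule factor_defect_independent)
    also have "\<dots> = factor_defect J l"
      using psubset.hyps(1) psubset.prems(2) smaller l(1) by (rule factor_defect_independent[symmetric])
    finally show ?thesis using l_zero by simp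
  qed
qed

lemma Phi_word_factor:
  "\<Phi> (word_of \<omega> \<chi> a {1..n}) =
    \<Phi> (word_of \<omega> \<chi> a V) * (\<Prod>t\<in>{0..card V}. \<Phi> (word_of \<omega> \<chi> a (gap t)))"
proof -
  have "gap t \<inter> {1..n} = gap t" "finite (gap t)" for t
    using chi_gap_subset[of \<chi> n V t] finite_subset by auto
  then show ?thesis
    using factor_defect_eq_zero[of "{1..n}" "\<lambda>_. 0"] V_subset finite_V
    by (simp add: factor_defect_def uext_scalars_zero)
qed

end

context bimonotone_functionals
begin

lemma phi_word_factor:
  assumes V: "V \<subseteq> {1..n}" and n: "n \<ge> 1"
    and a1: "\<forall>j\<in>{1..n}. a1 j \<in> Alg 1 (\<chi> j)" and a2: "\<forall>j\<in>{1..n}. a2 j \<in> Alg 2 (\<chi> j)"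
  shows "\<phi> (lprod (map (\<lambda>j. if j \<in> V then a1 j else a2 j) [1..<n + 1])) =
    phiprod \<phi> (map a1 (sorted_list_of_set V)) *
      (\<Prod>W\<leftarrow>chi_gaps \<chi> n V. phiprod \<phi> (map a2 (sorted_list_of_set W)))"
proof -
  define \<omega> where "\<omega> j = (if j \<in> V then 1 else 2 :: nat)" for j
  define a where "a = (\<lambda>j. if j \<in> V then a1 j else a2 j)"
  interpret bimonotone_split \<phi> Alg \<Phi> \<Psi> n \<chi> V \<omega> a
    using V a1 a2 by unfold_locales (auto simp: a_def \<omega>_def fun_eq_iff)
  have restrict: "\<Phi> (word_of \<omega> \<chi> a S) = phiprod \<phi> (map b (sorted_list_of_set S))"
    if "S \<subseteq> {1..n}" "\<forall>j\<in>S. a j = b j" for S b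
  proof -
    have "map a (sorted_list_of_set S) = map b (sorted_list_of_set S)"
      using that finite_subset[OF that(1)] by (intro map_cong) auto
    with Phi_word_of[OF that(1)] show ?thesis by (simp only:)
  qed
  have "sorted_list_of_set {1..n} = [1..<n + 1]"
    by (simp add: atLeastLessThanSuc_atLeastAtMost[symmetric])
  then have "\<phi> (lprod (map a [1..<n + 1])) = \<Phi> (word_of \<omega> \<chi> a {1..n})"
    using n restrict[of "{1..n}" a] by (simp add: phiprod_def)
  also have "\<dots> = \<Phi> (word_of \<omega> \<chi> a V) * (\<Prod>t\<in>{0..card V}. \<Phi> (word_of \<omega> \<chi> a (gap t)))"
    by (rule Phi_word_factor)
  also have "\<dots> = phiprod \<phi> (map a1 (sorted_list_of_set V)) *
      (\<Prod>t\<in>{0..card V}. phiprod \<phi> (map a2 (sorted_list_of_set (gap t))))"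
  proof -
    have "\<Phi> (word_of \<omega> \<chi> a V) = phiprod \<phi> (map a1 (sorted_list_of_set V))"
      by (rule restrict) (use V in \<open>auto simp: a_def\<close>)
    moreover have "\<Phi> (word_of \<omega> \<chi> a (gap t)) = phiprod \<phi> (map a2 (sorted_list_of_set (gap t)))" for t
      by (rule restrict) (use chi_gap_subset[of \<chi> n V t] in \<open>auto simp: a_def\<close>)
    ultimately show ?thesis by simp
  qed
  also have "\<dots> = phiprod \<phi> (map a1 (sorted_list_of_set V)) *
      (\<Prod>W\<leftarrow>chi_gaps \<chi> n V. phiprod \<phi> (map a2 (sorted_list_of_set W)))"
    using finite_V by (simp add: prod_list_chi_gaps)
  finally show ?thesis unfolding a_def .
qed

end

theorem lemma3p8:
  fixes smul :: "complex \<Rightarrow> 'a::ring \<Rightarrow> 'a" and \<phi> :: "'a \<Rightarrow> complex"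
    and A1l A1r A2l A2r :: "'a set" and n :: nat and \<chi> :: "nat \<Rightarrow> side"
    and a1 a2 :: "nat \<Rightarrow> 'a"
  assumes "nc_space smul \<phi>"
    and "subalgebra smul A1l" and "subalgebra smul A1r"
    and "subalgebra smul A2l" and "subalgebra smul A2r"
    and "bimono_indep smul \<phi> A1l A1r A2l A2r"
    and "n \<ge> 1"
    and "\<forall>j\<in>{1..n}. a1 j \<in> (if \<chi> j = Lft then A1l else A1r)"
    and "\<forall>j\<in>{1..n}. a2 j \<in> (if \<chi> j = Lft then A2l else A2r)"
  shows "phiprod \<phi> (map (\<lambda>j. a1 j + a2 j) [1..<n + 1]) =
    (\<Sum>V\<in>Pow {1..n}. phiprod \<phi> (map a1 (sorted_list_of_set V)) *
       (\<Prod>W\<leftarrow>chi_gaps \<chi> n V. phiprod \<phi> (map a2 (sorted_list_of_set W))))"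
proof -
  obtain \<Phi> \<Psi> where "bimonotone_functionals \<phi> (alg4 A1l A1r A2l A2r) \<Phi> \<Psi>"
    using bimono_indep_imp_bimonotone_functionals[OF assms(6)] .
  then interpret bimonotone_functionals \<phi> "alg4 A1l A1r A2l A2r" \<Phi> \<Psi> .
  have lin: "lin_functional smul \<phi>" using assms(1) unfolding nc_space_def by blast
  have idx: "distinct [1..<n + 1]" "[1..<n + 1] \<noteq> []" "set [1..<n + 1] = {1..n}"
    using assms(7) by auto
  have "phiprod \<phi> (map (\<lambda>j. a1 j + a2 j) [1..<n + 1]) =
      \<phi> (lprod (map (\<lambda>j. a1 j + a2 j) [1..<n + 1]))"
    using idx(2) by (simp only: phiprod_def map_is_Nil_conv if_False)
  also have "\<dots> = (\<Sum>V\<in>Pow {1..n}. \<phi> (lprod (map (\<lambda>j. if j \<in> V then a1 j else a2 j) [1..<n + 1])))"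
    unfolding lprod_map_add[OF idx(1,2)] idx(3) by (rule lin_functional_sum[OF lin])
  also have "\<dots> = (\<Sum>V\<in>Pow {1..n}. phiprod \<phi> (map a1 (sorted_list_of_set V)) *
       (\<Prod>W\<leftarrow>chi_gaps \<chi> n V. phiprod \<phi> (map a2 (sorted_list_of_set W))))"
    using assms(7-9) by (intro sum.cong refl phi_word_factor) (auto simp: alg4_def)
  finally show ?thesis .
qed

end
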